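(* Let $\mathcal{H}_A, \mathcal{H}_B$ be complex Hilbert spaces, $A \in \mathcal{B}(\mathcal{H}_A)$, $B \in \mathcal{B}(\mathcal{H}_B)$ with $\sigma(A^2) \cap \sigma(B^2) = \varnothing$, and let $T \in \mathcal{B}(\mathcal{H})$ be similar to $A \oplus B$ (via an invertible $S : \mathcal{H}_A \oplus \mathcal{H}_B \to \mathcal{H}$). Then $T \in \mathfrak{c}(\mathrm{nil}_2)$ if and only if $A \in \mathfrak{c}(\mathrm{nil}_2)$ and $B \in \mathfrak{c}(\mathrm{nil}_2)$.
   Context: For a Hilbert space $\mathcal{K}$, an operator $X \in \mathcal{B}(\mathcal{K})$ lies in $\mathfrak{c}(\mathrm{nil}_2)$ if $X = MN - NM$ for some $M, N \in \mathcal{B}(\mathcal{K})$ with $M^2 = 0 = N^2$ (the ambient space being the one on which $X$ acts). *)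

theory Defs
  imports "HOL-Analysis.Analysis"
begin

text \<open>A complex Hilbert space is encoded as a real Hilbert space
  (type class real_inner + complete_space, with inner product the real part of the
  complex inner product) together with a complex structure J (multiplication by i):
  a bounded real-linear map with J (J x) = - x which preserves the real inner product.\<close>

definition complex_structure :: "('a::real_inner \<Rightarrow> 'a) \<Rightarrow> bool" where
  "complex_structure J \<longleftrightarrow> bounded_linear J \<and> (\<forall>x. J (J x) = - x)
     \<and> (\<forall>x y. inner (J x) (J y) = inner x y)"

definition cscale :: "('a::real_vector \<Rightarrow> 'a) \<Rightarrow> complex \<Rightarrow> 'a \<Rightarrow> 'a" where
  "cscale J c x = Re c *\<^sub>R x + Im c *\<^sub>R J x"

definition cbounded :: "('a::real_normed_vector \<Rightarrow> 'a) \<Rightarrow> ('b::real_normed_vector \<Rightarrow> 'b)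
    \<Rightarrow> ('a \<Rightarrow> 'b) \<Rightarrow> bool" where
  "cbounded J1 J2 X \<longleftrightarrow> bounded_linear X \<and> (\<forall>x. X (J1 x) = J2 (X x))"

definition cinvertible :: "('a::real_normed_vector \<Rightarrow> 'a) \<Rightarrow> ('b::real_normed_vector \<Rightarrow> 'b)
    \<Rightarrow> ('a \<Rightarrow> 'b) \<Rightarrow> bool" where
  "cinvertible J1 J2 X \<longleftrightarrow> cbounded J1 J2 X \<and>
     (\<exists>Y. cbounded J2 J1 Y \<and> Y \<circ> X = id \<and> X \<circ> Y = id)"

definition cspectrum :: "('a::real_normed_vector \<Rightarrow> 'a) \<Rightarrow> ('a \<Rightarrow> 'a) \<Rightarrow> complex set" where
  "cspectrum J X = {c. \<not> cinvertible J J (\<lambda>x. X x - cscale J c x)}"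

definition c_nil2 :: "('a::real_normed_vector \<Rightarrow> 'a) \<Rightarrow> ('a \<Rightarrow> 'a) \<Rightarrow> bool" where
  "c_nil2 J X \<longleftrightarrow> (\<exists>M N. cbounded J J M \<and> cbounded J J N \<and>
      M \<circ> M = (\<lambda>x. 0) \<and> N \<circ> N = (\<lambda>x. 0) \<and> X = (\<lambda>x. M (N x) - N (M x)))"

definition dsum :: "('a \<Rightarrow> 'a) \<Rightarrow> ('b \<Rightarrow> 'b) \<Rightarrow> ('a \<times> 'b \<Rightarrow> 'a \<times> 'b)" where
  "dsum A B = (\<lambda>(x, y). (A x, B y))"

end

theory Submission
  imports Defs "HOL-Complex_Analysis.Cauchy_Integral_Formula"
begin

text \<open>Conjugation by S transports membership in c(nil_2), so it suffices to treat A \<oplus> B.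
  Representations of A and B add up to one of A \<oplus> B. Conversely, if A \<oplus> B = MN - NM with
  M^2 = N^2 = 0, then M and N anticommute with A \<oplus> B and therefore commute with
  A^2 \<oplus> B^2. By Rosenblum's theorem an operator X with A^2 X = X B^2 vanishes when
  \<sigma>(A^2) and \<sigma>(B^2) are disjoint, so M and N are block diagonal and their diagonal blocks
  represent A and B. Rosenblum's theorem itself follows from Liouville's theorem: for a
  bounded complex-linear functional \<psi>, the maps \<lambda> \<mapsto> \<psi>((A^2 - \<lambda>)\<inverse> X u) and
  \<lambda> \<mapsto> \<psi>(X (B^2 - \<lambda>)\<inverse> u) agree off both spectra and paste to an entire function
  vanishing at infinity.\<close>

lemma complex_structure_simps:
  assumes "complex_structure J"
  shows "J (x + y) = J x + J y" "J (r *\<^sub>R x) = r *\<^sub>R J x" "J (J x) = - x"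
    "J 0 = 0" "J (x - y) = J x - J y" "J (- x) = - J x"
  using assms unfolding complex_structure_def
  by (auto simp: bounded_linear.linear linear_add linear_scale linear_0 linear_diff linear_neg)

lemma complex_structure_inner:
  assumes "complex_structure J"
  shows "inner (J x) y = - inner x (J y)" "inner x (J x) = 0" "norm (J x) = norm x"
proof -
  have J_inner: "\<And>x y. inner (J x) (J y) = inner x y"
    using assms unfolding complex_structure_def by auto
  show skew: "inner (J x) y = - inner x (J y)" for x y
    using J_inner[of "J x" y] complex_structure_simps[OF assms] by simp
  show "inner x (J x) = 0"
    using skew[of x x] by (simp add: inner_commute)
  show "norm (J x) = norm x"
    by (simp add: norm_eq_sqrt_inner J_inner)
qed

lemma cscale_add_left: "cscale J (a + b) x = cscale J a x + cscale J b x"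
  by (simp add: cscale_def scaleR_add_left)

lemma cscale_diff_left: "cscale J (a - b) x = cscale J a x - cscale J b x"
  by (simp add: cscale_def scaleR_diff_left)

lemma cscale_one [simp]: "cscale J 1 x = x"
  by (simp add: cscale_def)

lemma cscale_uminus_left: "cscale J (- a) x = - cscale J a x"
  by (simp add: cscale_def)

lemma cscale_diff_right:
  assumes "complex_structure J"
  shows "cscale J c (x - y) = cscale J c x - cscale J c y"
  by (simp add: cscale_def complex_structure_simps[OF assms] scaleR_diff_right)

lemma cscale_zero_right:
  assumes "complex_structure J"
  shows "cscale J c 0 = 0"
  by (simp add: cscale_def complex_structure_simps[OF assms])

lemma cscale_mult:
  assumes "complex_structure J"
  shows "cscale J (a * b) x = cscale J a (cscale J b x)"
  using complex_structure_simps[OF assms] by (simp add: cscale_def algebra_simps)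

lemma norm_cscale:
  assumes "complex_structure J"
  shows "norm (cscale J c x) = cmod c * norm x"
proof -
  have "(norm (cscale J c x))\<^sup>2 = inner (Re c *\<^sub>R x + Im c *\<^sub>R J x) (Re c *\<^sub>R x + Im c *\<^sub>R J x)"
    by (simp add: cscale_def power2_norm_eq_inner)
  also have "\<dots> = (Re c)\<^sup>2 * (norm x)\<^sup>2 + (Im c)\<^sup>2 * (norm (J x))\<^sup>2"
    using complex_structure_inner(2)[OF assms, of x]
      power2_norm_eq_inner[of x, symmetric] power2_norm_eq_inner[of "J x", symmetric]
    by (simp add: inner_add_left inner_add_right power2_norm_eq_inner inner_commute
        power2_eq_square algebra_simps)
  also have "\<dots> = (cmod c * norm x)\<^sup>2"
    using complex_structure_inner(3)[OF assms, of x]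
    by (simp add: cmod_def power_mult_distrib algebra_simps)
  finally show ?thesis
    by (simp add: power2_eq_iff_nonneg)
qed

lemma cbounded_linear_simps:
  assumes "cbounded J1 J2 X"
  shows "X (x + y) = X x + X y" "X (x - y) = X x - X y" "X 0 = 0" "X (- x) = - X x"
    "X (r *\<^sub>R x) = r *\<^sub>R X x"
  using assms unfolding cbounded_def
  by (auto simp: bounded_linear.linear linear_add linear_scale linear_0 linear_diff linear_neg)

lemma cbounded_pos_bounded:
  assumes "cbounded J1 J2 X"
  obtains C where "C > 0" "\<And>x. norm (X x) \<le> C * norm x"
  using assms bounded_linear.pos_bounded unfolding cbounded_def by (metis mult.commute)

lemma cbounded_cscale_commute:
  assumes "cbounded J1 J2 X"
  shows "X (cscale J1 c x) = cscale J2 c (X x)"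
  using assms unfolding cbounded_def
  by (simp add: cscale_def linear_add linear_scale bounded_linear.linear)

lemma cbounded_compose:
  assumes "cbounded J1 J2 X" "cbounded J2 J3 Y"
  shows "cbounded J1 J3 (\<lambda>x. Y (X x))"
  using assms unfolding cbounded_def
  by (auto intro: bounded_linear_compose[of Y X, unfolded o_def])

lemma cbounded_diff:
  assumes "cbounded J1 J2 X" "cbounded J1 J2 Y" "complex_structure J2"
  shows "cbounded J1 J2 (\<lambda>x. X x - Y x)"
  using assms complex_structure_simps(5)[OF assms(3)] unfolding cbounded_def
  by (auto intro: bounded_linear_sub)

lemma cbounded_cscale:
  assumes "complex_structure J"
  shows "cbounded J J (cscale J c)"
proof -
  have "bounded_linear J"
    using assms unfolding complex_structure_def by auto
  then have "bounded_linear (\<lambda>x. Re c *\<^sub>R x + Im c *\<^sub>R J x)"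
    by (intro bounded_linear_add bounded_linear_scaleR_right bounded_linear_ident
        bounded_linear_compose[OF bounded_linear_scaleR_right])
  then show ?thesis
    using complex_structure_simps[OF assms] by (simp add: cbounded_def cscale_def[abs_def])
qed

lemma complex_linear_cscale:
  assumes "linear \<psi>" "\<And>w. \<psi> (J w) = \<i> * \<psi> w"
  shows "\<psi> (cscale J c w) = c * \<psi> w"
proof -
  have "\<psi> (cscale J c w) = (of_real (Re c) + \<i> * of_real (Im c)) * \<psi> w"
    using assms by (simp add: cscale_def linear_add linear_scale scaleR_conv_of_real algebra_simps)
  then show ?thesis
    by (simp add: complex_eq[symmetric])
qed

lemma id_minus_contraction_bij:
  fixes K :: "'a::{real_normed_vector, complete_space} \<Rightarrow> 'a"
  assumes "linear K" and bound: "\<And>x. norm (K x) \<le> q * norm x" and "0 \<le> q" "q < 1"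
  shows "bij (\<lambda>x. x - K x)"
proof (rule bijI)
  show "inj (\<lambda>x. x - K x)"
  proof (rule injI)
    fix x x' assume "x - K x = x' - K x'"
    then have "x - x' = K (x - x')"
      using \<open>linear K\<close> by (simp add: linear_diff algebra_simps)
    then have "norm (x - x') \<le> q * norm (x - x')"
      by (metis bound)
    then have "(1 - q) * norm (x - x') \<le> 0"
      by (simp add: algebra_simps)
    then show "x = x'"
      using \<open>q < 1\<close> by (simp add: mult_le_0_iff)
  qed
  have "\<exists>x. y = x - K x" for y
  proof -
    have "\<exists>!x. y + K x = x"
    proof (rule banach_fix_type)
      show "\<forall>x x'. dist (y + K x) (y + K x') \<le> q * dist x x'"
        using bound by (simp add: dist_norm flip: linear_diff[OF \<open>linear K\<close>])
    qed fact+
    then show ?thesis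
      by (metis add_diff_cancel)
  qed
  then show "surj (\<lambda>x. x - K x)"
    unfolding surj_def by blast
qed

lemma id_minus_contraction_inverse:
  fixes J :: "'a::{real_inner,complete_space} \<Rightarrow> 'a"
  assumes cs: "complex_structure J" and K: "cbounded J J K"
    and bound: "\<And>x. norm (K x) \<le> q * norm x" and q: "0 \<le> q" "q < 1"
  obtains Y where "cbounded J J Y" "\<And>x. Y (x - K x) = x" "\<And>y. Y y - K (Y y) = y"
    "\<And>y. norm (Y y) \<le> norm y / (1 - q)"
proof -
  note K_simps = cbounded_linear_simps[OF K]
  have "linear K"
    using K unfolding cbounded_def by (simp add: bounded_linear.linear)
  note bij = id_minus_contraction_bij[OF this bound q]
  define Y where "Y = inv (\<lambda>x. x - K x)"
  have left: "Y (x - K x) = x" for x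
    unfolding Y_def by (rule inv_f_f[OF bij_is_inj[OF bij]])
  have right: "Y y - K (Y y) = y" for y
    using bij surj_f_inv_f[OF bij_is_surj[OF bij]] by (simp add: Y_def)
  have Y_eqI: "Y y = x" if "x - K x = y" for x y
    using left that by blast
  have Y_norm: "norm (Y y) \<le> norm y / (1 - q)" for y
  proof -
    have "norm (Y y) \<le> norm y + norm (K (Y y))"
      using right[of y] by (metis add_diff_cancel norm_triangle_ineq diff_add_cancel)
    also have "\<dots> \<le> norm y + q * norm (Y y)"
      using bound by simp
    finally show ?thesis
      using q by (simp add: field_simps)
  qed
  have Y_add: "Y (a + b) = Y a + Y b" for a b
  proof (rule Y_eqI)
    have "Y a + Y b - K (Y a + Y b) = (Y a - K (Y a)) + (Y b - K (Y b))"
      by (simp add: K_simps algebra_simps)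
    then show "Y a + Y b - K (Y a + Y b) = a + b"
      by (simp only: right)
  qed
  have Y_scale: "Y (r *\<^sub>R a) = r *\<^sub>R Y a" for r a
  proof (rule Y_eqI)
    have "r *\<^sub>R Y a - K (r *\<^sub>R Y a) = r *\<^sub>R (Y a - K (Y a))"
      by (simp add: K_simps scaleR_diff_right)
    then show "r *\<^sub>R Y a - K (r *\<^sub>R Y a) = r *\<^sub>R a"
      by (simp only: right)
  qed
  have KJ: "K (J x) = J (K x)" for x
    using K unfolding cbounded_def by auto
  have Y_J: "Y (J a) = J (Y a)" for a
  proof (rule Y_eqI)
    have "J (Y a) - K (J (Y a)) = J (Y a - K (Y a))"
      by (simp add: KJ complex_structure_simps[OF cs])
    then show "J (Y a) - K (J (Y a)) = J a"
      by (simp only: right)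
  qed
  have "bounded_linear Y"
    by (rule bounded_linear_intro[where K="1 / (1 - q)"]) (use Y_add Y_scale Y_norm in auto)
  then have "cbounded J J Y"
    unfolding cbounded_def using Y_J by auto
  then show thesis
    using that left right Y_norm by blast
qed

definition shift_op :: "('a::real_vector \<Rightarrow> 'a) \<Rightarrow> ('a \<Rightarrow> 'a) \<Rightarrow> complex \<Rightarrow> 'a \<Rightarrow> 'a" where
  "shift_op J P c = (\<lambda>x. P x - cscale J c x)"

text \<open>For c in the spectrum, inv returns an arbitrary function; every lemma about
  resolvent J P c below assumes c \<notin> cspectrum J P.\<close>

definition resolvent :: "('a::real_vector \<Rightarrow> 'a) \<Rightarrow> ('a \<Rightarrow> 'a) \<Rightarrow> complex \<Rightarrow> 'a \<Rightarrow> 'a" where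
  "resolvent J P c = inv (shift_op J P c)"

lemma cbounded_shift_op:
  assumes "complex_structure J" "cbounded J J P"
  shows "cbounded J J (shift_op J P c)"
  unfolding shift_op_def by (rule cbounded_diff[OF assms(2) cbounded_cscale[OF assms(1)] assms(1)])

lemma not_in_cspectrum_iff: "c \<notin> cspectrum J P \<longleftrightarrow> cinvertible J J (shift_op J P c)"
  unfolding cspectrum_def shift_op_def by simp

lemma resolvent_eqI:
  assumes "\<And>x. R (shift_op J P c x) = x" "\<And>y. shift_op J P c (R y) = y"
  shows "resolvent J P c = R"
  unfolding resolvent_def by (rule inv_unique_comp) (use assms in \<open>auto simp: fun_eq_iff\<close>)

lemma resolvent_inverse:
  assumes "c \<notin> cspectrum J P"
  shows "cbounded J J (resolvent J P c)" "resolvent J P c (shift_op J P c x) = x"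
    "shift_op J P c (resolvent J P c y) = y"
proof -
  obtain R where R: "cbounded J J R" "R \<circ> shift_op J P c = id" "shift_op J P c \<circ> R = id"
    using assms unfolding not_in_cspectrum_iff cinvertible_def by blast
  have R_eq: "resolvent J P c = R"
    using R by (intro resolvent_eqI) (simp_all add: fun_eq_iff)
  show "cbounded J J (resolvent J P c)" "resolvent J P c (shift_op J P c x) = x"
    "shift_op J P c (resolvent J P c y) = y"
    unfolding R_eq using R by (simp_all add: fun_eq_iff)
qed

lemma not_in_cspectrum_factor:
  fixes J :: "'a::{real_inner,complete_space} \<Rightarrow> 'a"
  assumes cs: "complex_structure J" and P: "cbounded J J P"
    and E: "cbounded J J E" "cbounded J J E'" "\<And>x. E' (E x) = x" "\<And>y. E (E' y) = y"
    and K: "cbounded J J K" and bound: "\<And>x. norm (K x) \<le> q * norm x" and q: "0 \<le> q" "q < 1"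
    and factor: "\<And>x. shift_op J P c x = E (x - K x)"
  shows "c \<notin> cspectrum J P" "norm (resolvent J P c y) \<le> norm (E' y) / (1 - q)"
proof -
  obtain Y where Y: "cbounded J J Y" "\<And>x. Y (x - K x) = x" "\<And>y. Y y - K (Y y) = y"
     "\<And>y. norm (Y y) \<le> norm y / (1 - q)"
    using id_minus_contraction_inverse[OF cs K bound q] by blast
  define R where "R = (\<lambda>y. Y (E' y))"
  have R_left: "R (shift_op J P c x) = x" for x
    unfolding R_def factor E Y by simp
  have R_right: "shift_op J P c (R y) = y" for y
    unfolding R_def factor Y E by simp
  have "cbounded J J R"
    unfolding R_def by (rule cbounded_compose[OF E(2) Y(1)])
  then have "cinvertible J J (shift_op J P c)"
    unfolding cinvertible_def
    using cbounded_shift_op[OF cs P] R_left R_right by (auto simp: fun_eq_iff intro!: exI[of _ R])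
  then show "c \<notin> cspectrum J P"
    by (simp add: not_in_cspectrum_iff)
  have "resolvent J P c = R"
    by (rule resolvent_eqI[OF R_left R_right])
  then show "norm (resolvent J P c y) \<le> norm (E' y) / (1 - q)"
    using Y(4) by (simp add: R_def)
qed

lemma not_in_cspectrum_near:
  fixes J :: "'a::{real_inner,complete_space} \<Rightarrow> 'a"
  assumes cs: "complex_structure J" and P: "cbounded J J P" and \<mu>: "\<mu> \<notin> cspectrum J P"
    and bound: "\<And>y. norm (resolvent J P \<mu> y) \<le> K * norm y" and "0 \<le> K"
    and close: "cmod (l - \<mu>) * K < 1"
  shows "l \<notin> cspectrum J P" "norm (resolvent J P l y) \<le> K / (1 - cmod (l - \<mu>) * K) * norm y"
proof -
  note R\<mu> = resolvent_inverse[OF \<mu>]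
  define d where "d = l - \<mu>"
  define D where "D = (\<lambda>x. resolvent J P \<mu> (cscale J d x))"
  have D: "cbounded J J D"
    unfolding D_def by (rule cbounded_compose[OF cbounded_cscale[OF cs] R\<mu>(1)])
  have D_bound: "norm (D x) \<le> (cmod d * K) * norm x" for x
    unfolding D_def using bound[of "cscale J d x"] by (simp add: norm_cscale[OF cs] algebra_simps)
  have factor: "shift_op J P l x = shift_op J P \<mu> (x - D x)" for x
  proof -
    have "shift_op J P \<mu> (x - D x) = shift_op J P \<mu> x - cscale J d x"
      unfolding D_def cbounded_linear_simps(2)[OF cbounded_shift_op[OF cs P]] R\<mu>(3) ..
    also have "\<dots> = shift_op J P l x"
      unfolding shift_op_def d_def using cscale_add_left[of J \<mu> "l - \<mu>" x] by simp
    finally show ?thesis by simp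
  qed
  have q: "0 \<le> cmod d * K" "cmod d * K < 1"
    using close \<open>0 \<le> K\<close> by (simp_all add: d_def)
  note result = not_in_cspectrum_factor[OF cs P cbounded_shift_op[OF cs P] R\<mu>(1) R\<mu>(2) R\<mu>(3)
      D D_bound q factor]
  show "l \<notin> cspectrum J P"
    by (rule result(1))
  have "norm (resolvent J P l y) \<le> norm (resolvent J P \<mu> y) / (1 - cmod d * K)"
    by (rule result(2))
  also have "\<dots> \<le> K / (1 - cmod d * K) * norm y"
    using divide_right_mono[OF bound[of y], of "1 - cmod d * K"] q by simp
  finally show "norm (resolvent J P l y) \<le> K / (1 - cmod (l - \<mu>) * K) * norm y"
    by (simp add: d_def)
qed

lemma not_in_cspectrum_large:
  fixes J :: "'a::{real_inner,complete_space} \<Rightarrow> 'a"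
  assumes cs: "complex_structure J" and P: "cbounded J J P"
    and bound: "\<And>x. norm (P x) \<le> C * norm x" and "0 \<le> C" and large: "C < cmod l"
  shows "l \<notin> cspectrum J P" "norm (resolvent J P l y) \<le> norm y / (cmod l - C)"
proof -
  have "l \<noteq> 0"
    using large \<open>0 \<le> C\<close> by auto
  have cscale_inverse: "cscale J a (cscale J b v) = v" if "a * b = 1" for a b v
    using cscale_mult[OF cs, of a b v] that by simp
  define D where "D = (\<lambda>x. cscale J (1 / l) (P x))"
  have D: "cbounded J J D"
    unfolding D_def by (rule cbounded_compose[OF P cbounded_cscale[OF cs]])
  have D_bound: "norm (D x) \<le> (C / cmod l) * norm x" for x
    unfolding D_def using bound[of x] \<open>l \<noteq> 0\<close>
    by (simp add: norm_cscale[OF cs] norm_divide divide_right_mono field_simps)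
  have factor: "shift_op J P l x = cscale J (- l) (x - D x)" for x
    using cscale_inverse[of l "1 / l"] \<open>l \<noteq> 0\<close>
    by (simp add: shift_op_def D_def cscale_diff_right[OF cs] cscale_uminus_left)
  have q: "0 \<le> C / cmod l" "C / cmod l < 1"
    using \<open>0 \<le> C\<close> large by (auto simp: divide_less_eq)
  have inverse: "cscale J (- 1 / l) (cscale J (- l) v) = v"
    "cscale J (- l) (cscale J (- 1 / l) v) = v" for v using cscale_inverse \<open>l \<noteq> 0\<close> by simp_all
  note result = not_in_cspectrum_factor[OF cs P cbounded_cscale[OF cs] cbounded_cscale[OF cs]
      inverse D D_bound q factor]
  show "l \<notin> cspectrum J P"
    by (rule result(1))
  have "norm (resolvent J P l y) \<le> norm (cscale J (- 1 / l) y) / (1 - C / cmod l)"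
    by (rule result(2))
  also have "\<dots> = norm y / (cmod l - C)"
    using \<open>l \<noteq> 0\<close> large by (simp add: norm_cscale[OF cs] norm_divide field_simps)
  finally show "norm (resolvent J P l y) \<le> norm y / (cmod l - C)" .
qed

lemma resolvent_locally_bounded:
  fixes J :: "'a::{real_inner,complete_space} \<Rightarrow> 'a"
  assumes cs: "complex_structure J" and P: "cbounded J J P" and l0: "l0 \<notin> cspectrum J P"
  obtains K r where "K > 0" "r > 0" "\<And>y. norm (resolvent J P l0 y) \<le> K * norm y"
    "\<And>l. cmod (l - l0) < r \<Longrightarrow> l \<notin> cspectrum J P"
    "\<And>l y. cmod (l - l0) < r \<Longrightarrow> norm (resolvent J P l y) \<le> 2 * K * norm y"
proof -
  obtain K where "K > 0" and K: "\<And>y. norm (resolvent J P l0 y) \<le> K * norm y"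
    using cbounded_pos_bounded[OF resolvent_inverse(1)[OF l0]] by blast
  have close: "cmod (l - l0) * K < 1 / 2" if "cmod (l - l0) < 1 / (2 * K)" for l
    using that \<open>K > 0\<close> by (simp add: field_simps)
  note near = not_in_cspectrum_near[OF cs P l0 K less_imp_le[OF \<open>K > 0\<close>]]
  show thesis
  proof (rule that[of K "1 / (2 * K)"])
    fix l y assume l: "cmod (l - l0) < 1 / (2 * K)"
    then show "l \<notin> cspectrum J P"
      using close[OF l] near(1) by simp
    have "norm (resolvent J P l y) \<le> K / (1 - cmod (l - l0) * K) * norm y"
      using close[OF l] near(2) by simp
    also have "\<dots> \<le> 2 * K * norm y"
      using close[OF l] \<open>K > 0\<close> by (intro mult_right_mono) (simp_all add: field_simps)
    finally show "norm (resolvent J P l y) \<le> 2 * K * norm y" .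
  qed (use \<open>K > 0\<close> K in auto)
qed

lemma open_resolvent_set:
  fixes J :: "'a::{real_inner,complete_space} \<Rightarrow> 'a"
  assumes "complex_structure J" "cbounded J J P"
  shows "open (- cspectrum J P)"
proof (rule openI)
  fix l0 assume "l0 \<in> - cspectrum J P"
  then obtain K r where "r > 0" "\<And>l. cmod (l - l0) < r \<Longrightarrow> l \<notin> cspectrum J P"
    using resolvent_locally_bounded[OF assms] by (metis ComplD)
  then show "\<exists>e>0. ball l0 e \<subseteq> - cspectrum J P"
    by (intro exI[of _ r]) (auto simp: dist_norm norm_minus_commute)
qed

lemma resolvent_identity:
  assumes "l \<notin> cspectrum J P" "m \<notin> cspectrum J P"
  shows "resolvent J P l w - resolvent J P m w
    = cscale J (l - m) (resolvent J P l (resolvent J P m w))"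
proof -
  note Rl = resolvent_inverse[OF assms(1)] and Rm = resolvent_inverse[OF assms(2)]
  define z where "z = resolvent J P m w"
  have "resolvent J P l w - resolvent J P m w
      = resolvent J P l (shift_op J P m z) - resolvent J P l (shift_op J P l z)"
    unfolding z_def Rl(2) Rm(3) ..
  also have "\<dots> = resolvent J P l (cscale J (l - m) z)"
    by (simp add: cbounded_linear_simps(2)[OF Rl(1), symmetric] shift_op_def cscale_diff_left)
  also have "\<dots> = cscale J (l - m) (resolvent J P l z)"
    by (rule cbounded_cscale_commute[OF Rl(1)])
  finally show ?thesis
    unfolding z_def .
qed

lemma resolvent_functional_has_field_derivative:
  fixes J :: "'a::{real_inner,complete_space} \<Rightarrow> 'a"
  assumes cs: "complex_structure J" and P: "cbounded J J P" and l0: "l0 \<notin> cspectrum J P"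
    and \<psi>: "bounded_linear \<psi>" "\<And>w. \<psi> (J w) = \<i> * \<psi> w"
  shows "((\<lambda>l. \<psi> (resolvent J P l w))
    has_field_derivative \<psi> (resolvent J P l0 (resolvent J P l0 w))) (at l0)"
proof -
  obtain K r where "K > 0" "r > 0" and K: "\<And>y. norm (resolvent J P l0 y) \<le> K * norm y"
    and near: "\<And>l. cmod (l - l0) < r \<Longrightarrow> l \<notin> cspectrum J P"
    and near_bound: "\<And>l y. cmod (l - l0) < r \<Longrightarrow> norm (resolvent J P l y) \<le> 2 * K * norm y"
    using resolvent_locally_bounded[OF cs P l0] by blast
  define v where "v = resolvent J P l0 w"
  have ev: "eventually (\<lambda>l. cmod (l - l0) < r \<and> l \<noteq> l0) (at l0)"
    unfolding eventually_at using \<open>r > 0\<close> by (auto simp: dist_norm intro!: exI[of _ r])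
  have "norm (resolvent J P l v - resolvent J P l0 v) \<le> (2 * K * (K * norm v)) * cmod (l - l0)"
    if "cmod (l - l0) < r" for l
  proof -
    have "norm (resolvent J P l v - resolvent J P l0 v)
        = cmod (l - l0) * norm (resolvent J P l (resolvent J P l0 v))"
      by (simp add: resolvent_identity[OF near[OF that] l0] norm_cscale[OF cs])
    also have "\<dots> \<le> cmod (l - l0) * (2 * K * (K * norm v))"
      using near_bound[OF that, of "resolvent J P l0 v"] K[of v] \<open>K > 0\<close>
      by (intro mult_left_mono) (auto intro: order_trans)
    finally show ?thesis
      by (simp add: mult.commute)
  qed
  then have "eventually (\<lambda>l. norm (resolvent J P l v - resolvent J P l0 v)
      \<le> (2 * K * (K * norm v)) * cmod (l - l0)) (at l0)"
    using ev by (auto elim: eventually_mono)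
  moreover have "((\<lambda>l. (2 * K * (K * norm v)) * cmod (l - l0)) \<longlongrightarrow> 0) (at l0)"
    by (intro tendsto_mult_right_zero tendsto_norm_zero LIM_zero tendsto_ident_at)
  ultimately have "((\<lambda>l. resolvent J P l v - resolvent J P l0 v) \<longlongrightarrow> 0) (at l0)"
    by (rule Lim_null_comparison)
  then have "((\<lambda>l. \<psi> (resolvent J P l v)) \<longlongrightarrow> \<psi> (resolvent J P l0 v)) (at l0)"
    by (rule bounded_linear.tendsto[OF \<psi>(1), OF LIM_zero_cancel])
  moreover have "(\<psi> (resolvent J P l w) - \<psi> (resolvent J P l0 w)) / (l - l0)
      = \<psi> (resolvent J P l v)" if "cmod (l - l0) < r \<and> l \<noteq> l0" for l
  proof -
    have "\<psi> (resolvent J P l w) - \<psi> (resolvent J P l0 w)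
        = \<psi> (resolvent J P l w - resolvent J P l0 w)"
      using \<psi>(1) by (simp add: linear_diff bounded_linear.linear)
    also have "\<dots> = (l - l0) * \<psi> (resolvent J P l v)"
      unfolding resolvent_identity[OF near[OF conjunct1[OF that]] l0] v_def
      using that by (simp add: complex_linear_cscale[OF bounded_linear.linear[OF \<psi>(1)] \<psi>(2)])
    finally show ?thesis
      using that by simp
  qed
  ultimately show ?thesis
    unfolding has_field_derivative_iff v_def[symmetric]
    using ev by (auto elim!: Lim_transform_eventually eventually_mono)
qed

lemma resolvent_functional_holomorphic:
  fixes J :: "'a::{real_inner,complete_space} \<Rightarrow> 'a"
  assumes "complex_structure J" "cbounded J J P" "bounded_linear \<psi>" "\<And>w. \<psi> (J w) = \<i> * \<psi> w"
  shows "(\<lambda>l. \<psi> (resolvent J P l w)) holomorphic_on (- cspectrum J P)"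
  using resolvent_functional_has_field_derivative[OF assms(1,2) _ assms(3,4)]
  by (auto simp: holomorphic_on_open[OF open_resolvent_set[OF assms(1,2)]])

lemma resolvent_functional_tendsto_zero:
  fixes J :: "'a::{real_inner,complete_space} \<Rightarrow> 'a"
  assumes cs: "complex_structure J" and P: "cbounded J J P" and \<psi>: "bounded_linear \<psi>"
  shows "((\<lambda>l. \<psi> (resolvent J P l w)) \<longlongrightarrow> 0) at_infinity"
proof -
  obtain C where "C > 0" and C: "\<And>x. norm (P x) \<le> C * norm x"
    using cbounded_pos_bounded[OF P] by blast
  obtain C\<psi> where "C\<psi> > 0" and C\<psi>: "\<And>x. norm (\<psi> x) \<le> norm x * C\<psi>"
    using \<psi> bounded_linear.pos_bounded by blast
  have "norm (\<psi> (resolvent J P l w)) \<le> (2 * C\<psi> * norm w) * norm (inverse l)"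
    if "2 * C \<le> cmod l" for l
  proof -
    have "C < cmod l"
      using that \<open>C > 0\<close> by simp
    have "norm (\<psi> (resolvent J P l w)) \<le> norm (resolvent J P l w) * C\<psi>"
      by (rule C\<psi>)
    also have "\<dots> \<le> norm w / (cmod l - C) * C\<psi>"
      using not_in_cspectrum_large(2)[OF cs P C _ \<open>C < cmod l\<close>] \<open>C > 0\<close> \<open>C\<psi> > 0\<close>
      by (intro mult_right_mono) simp_all
    also have "\<dots> = (norm w * C\<psi>) * (1 / (cmod l - C))"
      by simp
    also have "\<dots> \<le> (norm w * C\<psi>) * (2 / cmod l)"
      using that \<open>C > 0\<close> \<open>C\<psi> > 0\<close> by (intro mult_left_mono) (simp_all add: divide_simps)
    also have "\<dots> = (2 * C\<psi> * norm w) * norm (inverse l)"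
      by (simp add: norm_inverse norm_divide field_simps)
    finally show ?thesis .
  qed
  then have "eventually (\<lambda>l. norm (\<psi> (resolvent J P l w)) \<le> (2 * C\<psi> * norm w) * norm (inverse l))
      at_infinity"
    unfolding eventually_at_infinity by blast
  moreover have "((\<lambda>l. (2 * C\<psi> * norm w) * norm (inverse l)) \<longlongrightarrow> 0) (at_infinity :: complex filter)"
    by (intro tendsto_mult_right_zero tendsto_norm_zero tendsto_inverse_0)
  ultimately show ?thesis
    by (rule Lim_null_comparison)
qed

definition cinner :: "('a::real_inner \<Rightarrow> 'a) \<Rightarrow> 'a \<Rightarrow> 'a \<Rightarrow> complex" where
  "cinner J w v = complex_of_real (inner w v) + \<i> * complex_of_real (inner w (J v))"

lemma bounded_linear_cinner_left: "bounded_linear (\<lambda>w. cinner J w v)"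
  unfolding cinner_def
  by (intro bounded_linear_add bounded_linear_mult_right
      bounded_linear_compose[OF bounded_linear_of_real bounded_linear_inner_left]
      bounded_linear_compose[OF bounded_linear_mult_right
        bounded_linear_compose[OF bounded_linear_of_real bounded_linear_inner_left]])

lemma cinner_J_left:
  assumes "complex_structure J"
  shows "cinner J (J w) v = \<i> * cinner J w v"
proof -
  have "inner (J w) (J v) = inner w v"
    using assms unfolding complex_structure_def by auto
  then show ?thesis
    using complex_structure_inner(1)[OF assms, of w v] by (simp add: cinner_def algebra_simps)
qed

lemma Re_cinner_self: "Re (cinner J w w) = inner w w"
  by (simp add: cinner_def)

lemma resolvent_intertwine:
  assumes X: "cbounded JB JA X" and intertwine: "\<And>y. P (X y) = X (Q y)"
    and "l \<notin> cspectrum JA P" "l \<notin> cspectrum JB Q"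
  shows "resolvent JA P l (X u) = X (resolvent JB Q l u)"
proof -
  have shift: "X (shift_op JB Q l z) = shift_op JA P l (X z)" for z
    unfolding shift_op_def
    by (simp add: cbounded_linear_simps(2)[OF X] cbounded_cscale_commute[OF X] intertwine)
  have "resolvent JA P l (X u) = resolvent JA P l (X (shift_op JB Q l (resolvent JB Q l u)))"
    by (simp add: resolvent_inverse(3)[OF assms(4)])
  also have "\<dots> = X (resolvent JB Q l u)"
    unfolding shift resolvent_inverse(2)[OF assms(3)] ..
  finally show ?thesis .
qed

theorem intertwiner_eq_0_if_disjoint_cspectrum:
  fixes JA :: "'a::{real_inner,complete_space} \<Rightarrow> 'a"
    and JB :: "'b::{real_inner,complete_space} \<Rightarrow> 'b"
  assumes csA: "complex_structure JA" and csB: "complex_structure JB"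
    and P: "cbounded JA JA P" and Q: "cbounded JB JB Q" and X: "cbounded JB JA X"
    and disjoint: "cspectrum JA P \<inter> cspectrum JB Q = {}"
    and intertwine: "\<And>y. P (X y) = X (Q y)"
  shows "X u = 0"
proof -
  obtain C where "C > 0" and C: "\<And>x. norm (P x) \<le> C * norm x"
    using cbounded_pos_bounded[OF P] by blast
  have large: "l \<notin> cspectrum JA P" if "C < cmod l" for l
    using not_in_cspectrum_large(1)[OF csA P C _ that] \<open>C > 0\<close> by simp
  define l1 where "l1 = complex_of_real (C + 1)"
  have l1: "l1 \<notin> cspectrum JA P"
    using large \<open>C > 0\<close> by (simp add: l1_def)
  define w where "w = resolvent JA P l1 (X u)"
  define f where "f l = cinner JA (resolvent JA P l (X u)) w" for l
  define g where "g l = cinner JA (X (resolvent JB Q l u)) w" for l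
  define h where "h l = (if l \<in> - cspectrum JA P then f l else g l)" for l
  have f_holomorphic: "f holomorphic_on - cspectrum JA P"
    unfolding f_def
    by (rule resolvent_functional_holomorphic[OF csA P bounded_linear_cinner_left
          cinner_J_left[OF csA]])
  have "bounded_linear (\<lambda>y. cinner JA (X y) w)"
    "cinner JA (X (JB y)) w = \<i> * cinner JA (X y) w" for y
    using X bounded_linear_compose[OF bounded_linear_cinner_left]
    by (auto simp: cbounded_def cinner_J_left[OF csA])
  then have g_holomorphic: "g holomorphic_on - cspectrum JB Q"
    unfolding g_def by (rule resolvent_functional_holomorphic[OF csB Q])
  have "h holomorphic_on (- cspectrum JA P \<union> - cspectrum JB Q)"
    unfolding h_def[abs_def]
    using resolvent_intertwine[where P=P and Q=Q, OF X intertwine]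
    by (intro holomorphic_on_If_Un[OF f_holomorphic g_holomorphic
          open_resolvent_set[OF csA P] open_resolvent_set[OF csB Q]]) (simp add: f_def g_def)
  moreover have "- cspectrum JA P \<union> - cspectrum JB Q = UNIV"
    using disjoint by blast
  moreover have "(h \<longlongrightarrow> 0) at_infinity"
  proof (rule Lim_transform_eventually)
    show "(f \<longlongrightarrow> 0) at_infinity"
      unfolding f_def
      by (rule resolvent_functional_tendsto_zero[OF csA P bounded_linear_cinner_left])
    show "eventually (\<lambda>l. f l = h l) at_infinity"
      unfolding eventually_at_infinity h_def using large by (auto intro!: exI[of _ "C + 1"])
  qed
  ultimately have "h l1 = 0"
    by (intro Liouville_weak) simp_all
  then have "inner w w = 0"
    using l1 Re_cinner_self[of JA w] by (simp add: h_def f_def flip: w_def)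
  then have "resolvent JA P l1 (X u) = 0"
    by (simp add: w_def)
  then show "X u = 0"
    using resolvent_inverse(3)[OF l1, of "X u"]
    by (simp add: shift_op_def cbounded_linear_simps(3)[OF P] cscale_zero_right[OF csA])
qed

lemma dsum_apply [simp]: "dsum A B (x, y) = (A x, B y)"
  by (simp add: dsum_def)

lemma dsum_eq_iff: "dsum A B = dsum C D \<longleftrightarrow> A = C \<and> B = D"
  by (auto simp: fun_eq_iff dsum_def)

lemma dsum_comp: "dsum A B \<circ> dsum C D = dsum (A \<circ> C) (B \<circ> D)"
  by (simp add: fun_eq_iff dsum_def split: prod.splits)

lemma dsum_zero: "dsum (\<lambda>x. 0) (\<lambda>y. 0) = (\<lambda>z. 0)"
  by (simp add: fun_eq_iff dsum_def zero_prod_def split: prod.splits)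

lemma dsum_commutator:
  "(\<lambda>z. dsum MA MB (dsum NA NB z) - dsum NA NB (dsum MA MB z))
    = dsum (\<lambda>x. MA (NA x) - NA (MA x)) (\<lambda>y. MB (NB y) - NB (MB y))"
  by (simp add: fun_eq_iff dsum_def split: prod.splits)

lemma cbounded_dsum_iff:
  "cbounded (dsum JA JB) (dsum JA JB) (dsum MA MB) \<longleftrightarrow> cbounded JA JA MA \<and> cbounded JB JB MB"
proof
  assume M: "cbounded (dsum JA JB) (dsum JA JB) (dsum MA MB)"
  then have bl: "bounded_linear (dsum MA MB)"
    by (simp add: cbounded_def)
  have "bounded_linear MA"
    using bounded_linear_compose[OF bounded_linear_fst
        bounded_linear_compose[OF bl
          bounded_linear_Pair[OF bounded_linear_ident bounded_linear_zero]]]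
    by simp
  moreover have "bounded_linear MB"
    using bounded_linear_compose[OF bounded_linear_snd
        bounded_linear_compose[OF bl
          bounded_linear_Pair[OF bounded_linear_zero bounded_linear_ident]]]
    by simp
  moreover have "MA (JA x) = JA (MA x)" "MB (JB y) = JB (MB y)" for x y
    using M[unfolded cbounded_def] by (auto dest: spec[of _ "(x, y)"])
  ultimately show "cbounded JA JA MA \<and> cbounded JB JB MB"
    by (simp add: cbounded_def)
next
  assume "cbounded JA JA MA \<and> cbounded JB JB MB"
  then have "bounded_linear (\<lambda>z. (MA (fst z), MB (snd z)))"
    "MA (JA x) = JA (MA x)" "MB (JB y) = JB (MB y)" for x y
    unfolding cbounded_def
    by (auto intro!: bounded_linear_Pair bounded_linear_compose[OF _ bounded_linear_fst]
        bounded_linear_compose[OF _ bounded_linear_snd])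
  then show "cbounded (dsum JA JB) (dsum JA JB) (dsum MA MB)"
    by (simp add: cbounded_def dsum_def case_prod_beta')
qed

lemma cbounded_off_diagonal_blocks:
  assumes M: "cbounded (dsum JA JB) (dsum JA JB) M"
    and "complex_structure JA" "complex_structure JB"
  shows "cbounded JB JA (\<lambda>y. fst (M (0, y)))" "cbounded JA JB (\<lambda>x. snd (M (x, 0)))"
proof -
  have "bounded_linear M" and MJ: "\<And>z. M (dsum JA JB z) = dsum JA JB (M z)"
    using M unfolding cbounded_def by auto
  then have "bounded_linear (\<lambda>y. M (0, y))" "bounded_linear (\<lambda>x. M (x, 0))"
    by (auto intro!: bounded_linear_compose[of M] bounded_linear_Pair bounded_linear_ident
        bounded_linear_zero)
  moreover have "M (0, JB y) = dsum JA JB (M (0, y))" "M (JA x, 0) = dsum JA JB (M (x, 0))" for x y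
    using MJ[of "(0, y)"] MJ[of "(x, 0)"] by (simp_all add: complex_structure_simps assms)
  ultimately show "cbounded JB JA (\<lambda>y. fst (M (0, y)))" "cbounded JA JB (\<lambda>x. snd (M (x, 0)))"
    unfolding cbounded_def
    by (auto intro: bounded_linear_compose[OF bounded_linear_fst]
        bounded_linear_compose[OF bounded_linear_snd] simp: dsum_def case_prod_beta')
qed

lemma commute_dsum_imp_block_diagonal:
  fixes JA :: "'a::{real_inner,complete_space} \<Rightarrow> 'a"
    and JB :: "'b::{real_inner,complete_space} \<Rightarrow> 'b"
  assumes csA: "complex_structure JA" and csB: "complex_structure JB"
    and P: "cbounded JA JA P" and Q: "cbounded JB JB Q"
    and disjoint: "cspectrum JA P \<inter> cspectrum JB Q = {}"
    and M: "cbounded (dsum JA JB) (dsum JA JB) M"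
    and commute: "\<And>z. M (dsum P Q z) = dsum P Q (M z)"
  shows "M = dsum (\<lambda>x. fst (M (x, 0))) (\<lambda>y. snd (M (0, y)))"
proof -
  note blocks = cbounded_off_diagonal_blocks[OF M csA csB]
  have upper: "fst (M (0, y)) = 0" for y
  proof (rule intertwiner_eq_0_if_disjoint_cspectrum[OF csA csB P Q blocks(1) disjoint])
    show "P (fst (M (0, y))) = fst (M (0, Q y))" for y
      using arg_cong[OF commute[of "(0, y)"], of fst]
      by (simp add: cbounded_linear_simps(3)[OF P] dsum_def case_prod_beta')
  qed
  have lower: "snd (M (x, 0)) = 0" for x
  proof (rule intertwiner_eq_0_if_disjoint_cspectrum[OF csB csA Q P blocks(2)])
    show "cspectrum JB Q \<inter> cspectrum JA P = {}"
      using disjoint by blast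
    show "Q (snd (M (x, 0))) = snd (M (P x, 0))" for x
      using arg_cong[OF commute[of "(x, 0)"], of snd]
      by (simp add: cbounded_linear_simps(3)[OF Q] dsum_def case_prod_beta')
  qed
  have "M (x, y) = M (x, 0) + M (0, y)" for x y
    using cbounded_linear_simps(1)[OF M, of "(x, 0)" "(0, y)"] by simp
  then show ?thesis
    using upper lower by (simp add: fun_eq_iff prod_eq_iff dsum_def case_prod_beta')
qed

lemma square_zero_commutes_with_commutator_square:
  assumes "linear M" "linear N" "\<And>x. M (M x) = 0" "\<And>x. N (N x) = 0"
  defines "C \<equiv> \<lambda>x. M (N x) - N (M x)"
  shows "M (C (C x)) = C (C (M x))" "N (C (C x)) = C (C (N x))"
proof -
  have C_neg: "C (- x) = - C x" for x
    using assms(1,2) by (simp add: C_def linear_neg)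
  have "M (C x) = - C (M x)" "N (C x) = - C (N x)" for x
    using assms(1-4) by (simp_all add: C_def linear_diff linear_0)
  then show "M (C (C x)) = C (C (M x))" "N (C (C x)) = C (C (N x))"
    by (simp_all add: C_neg)
qed

lemma c_nil2_conj:
  assumes S: "cbounded J1 J2 S" and S': "cbounded J2 J1 S'" and S'S: "\<And>x. S' (S x) = x"
    and "c_nil2 J1 X"
  shows "c_nil2 J2 (\<lambda>y. S (X (S' y)))"
proof -
  obtain M N where M: "cbounded J1 J1 M" and N: "cbounded J1 J1 N"
    and MM: "M \<circ> M = (\<lambda>x. 0)" and NN: "N \<circ> N = (\<lambda>x. 0)" and X: "X = (\<lambda>x. M (N x) - N (M x))"
    using \<open>c_nil2 J1 X\<close> unfolding c_nil2_def by blast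
  show ?thesis
    unfolding c_nil2_def
  proof (intro exI conjI)
    show "cbounded J2 J2 (\<lambda>y. S (M (S' y)))" "cbounded J2 J2 (\<lambda>y. S (N (S' y)))"
      by (intro cbounded_compose[OF _ S] cbounded_compose[OF S'] M N)+
    show "(\<lambda>y. S (M (S' y))) \<circ> (\<lambda>y. S (M (S' y))) = (\<lambda>x. 0)"
      "(\<lambda>y. S (N (S' y))) \<circ> (\<lambda>y. S (N (S' y))) = (\<lambda>x. 0)"
      using MM NN by (simp_all add: fun_eq_iff S'S cbounded_linear_simps(3)[OF S])
    show "(\<lambda>y. S (X (S' y))) = (\<lambda>y. S (M (S' (S (N (S' y))))) - S (N (S' (S (M (S' y))))))"
      by (simp add: X S'S cbounded_linear_simps(2)[OF S])
  qed
qed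

lemma c_nil2_dsum:
  assumes "c_nil2 JA A" "c_nil2 JB B"
  shows "c_nil2 (dsum JA JB) (dsum A B)"
proof -
  obtain MA NA where "cbounded JA JA MA" "cbounded JA JA NA"
    "MA \<circ> MA = (\<lambda>x. 0)" "NA \<circ> NA = (\<lambda>x. 0)" "A = (\<lambda>x. MA (NA x) - NA (MA x))"
    using assms(1) unfolding c_nil2_def by blast
  moreover obtain MB NB where "cbounded JB JB MB" "cbounded JB JB NB"
    "MB \<circ> MB = (\<lambda>y. 0)" "NB \<circ> NB = (\<lambda>y. 0)" "B = (\<lambda>y. MB (NB y) - NB (MB y))"
    using assms(2) unfolding c_nil2_def by blast
  ultimately show ?thesis
    unfolding c_nil2_def
    by (intro exI[of _ "dsum MA MB"] exI[of _ "dsum NA NB"])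
      (simp add: cbounded_dsum_iff dsum_comp dsum_zero dsum_commutator)
qed

lemma c_nil2_dsum_components:
  fixes JA :: "'a::{real_inner,complete_space} \<Rightarrow> 'a"
    and JB :: "'b::{real_inner,complete_space} \<Rightarrow> 'b"
  assumes csA: "complex_structure JA" and csB: "complex_structure JB"
    and A: "cbounded JA JA A" and B: "cbounded JB JB B"
    and disjoint: "cspectrum JA (A \<circ> A) \<inter> cspectrum JB (B \<circ> B) = {}"
    and "c_nil2 (dsum JA JB) (dsum A B)"
  shows "c_nil2 JA A \<and> c_nil2 JB B"
proof -
  obtain M N where M: "cbounded (dsum JA JB) (dsum JA JB) M"
    and N: "cbounded (dsum JA JB) (dsum JA JB) N"
    and MM: "M \<circ> M = (\<lambda>z. 0)" and NN: "N \<circ> N = (\<lambda>z. 0)"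
    and AB: "dsum A B = (\<lambda>z. M (N z) - N (M z))"
    using \<open>c_nil2 (dsum JA JB) (dsum A B)\<close> unfolding c_nil2_def by blast
  have linear: "linear M" "linear N"
    using M N by (simp_all add: cbounded_def bounded_linear.linear)
  have square_zero: "M (M z) = 0" "N (N z) = 0" for z
    using MM NN by (metis comp_apply)+
  note commute = square_zero_commutes_with_commutator_square[OF linear square_zero]
  have square: "dsum (A \<circ> A) (B \<circ> B) z = M (N (M (N z) - N (M z))) - N (M (M (N z) - N (M z)))"
    for z by (metis AB comp_apply dsum_comp)
  have "M (dsum (A \<circ> A) (B \<circ> B) z) = dsum (A \<circ> A) (B \<circ> B) (M z)"
    "N (dsum (A \<circ> A) (B \<circ> B) z) = dsum (A \<circ> A) (B \<circ> B) (N z)" for z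
    unfolding square by (rule commute)+
  moreover have "cbounded JA JA (A \<circ> A)" "cbounded JB JB (B \<circ> B)"
    using cbounded_compose[OF A A] cbounded_compose[OF B B] by (simp_all add: comp_def)
  ultimately obtain MA MB NA NB where M_eq: "M = dsum MA MB" and N_eq: "N = dsum NA NB"
    using commute_dsum_imp_block_diagonal[OF csA csB _ _ disjoint M]
      commute_dsum_imp_block_diagonal[OF csA csB _ _ disjoint N] by metis
  show ?thesis
    using M N MM NN AB
    unfolding M_eq N_eq c_nil2_def cbounded_dsum_iff dsum_comp dsum_commutator dsum_eq_iff
      dsum_zero[symmetric]
    by blast
qed

theorem proposition2p02:
  fixes JA :: "'a::{real_inner, complete_space} \<Rightarrow> 'a"
    and JB :: "'b::{real_inner, complete_space} \<Rightarrow> 'b"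
    and J :: "'c::{real_inner, complete_space} \<Rightarrow> 'c"
    and A :: "'a \<Rightarrow> 'a" and B :: "'b \<Rightarrow> 'b" and T :: "'c \<Rightarrow> 'c"
    and S :: "'a \<times> 'b \<Rightarrow> 'c" and Sinv :: "'c \<Rightarrow> 'a \<times> 'b"
  assumes "complex_structure JA" and "complex_structure JB" and "complex_structure J"
    and "cbounded JA JA A" and "cbounded JB JB B" and "cbounded J J T"
    and "cspectrum JA (A \<circ> A) \<inter> cspectrum JB (B \<circ> B) = {}"
    and "cbounded (dsum JA JB) J S" and "cbounded J (dsum JA JB) Sinv"
    and "Sinv \<circ> S = id" and "S \<circ> Sinv = id"
    and "T = S \<circ> dsum A B \<circ> Sinv"
  shows "c_nil2 J T \<longleftrightarrow> c_nil2 JA A \<and> c_nil2 JB B"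
proof -
  have Sinv_S: "Sinv (S z) = z" and S_Sinv: "S (Sinv x) = x" for z x
    using assms(10,11) by (simp_all add: pointfree_idE)
  have T_eq: "T = (\<lambda>x. S (dsum A B (Sinv x)))"
    using assms(12) by (simp add: fun_eq_iff)
  moreover have "dsum A B = (\<lambda>z. Sinv (T (S z)))"
    using T_eq Sinv_S by (simp add: fun_eq_iff)
  ultimately have "c_nil2 J T \<longleftrightarrow> c_nil2 (dsum JA JB) (dsum A B)"
    using c_nil2_conj[OF assms(8,9) Sinv_S] c_nil2_conj[OF assms(9,8) S_Sinv] by metis
  also have "\<dots> \<longleftrightarrow> c_nil2 JA A \<and> c_nil2 JB B"
    using c_nil2_dsum c_nil2_dsum_components[OF assms(1,2,4,5,7)] by blast
  finally show ?thesis .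
qed

end
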